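(* Let $G$ be a symmetrically factorizable Lie group with subgroups $G_\pm$, and suppose both $\theta$ and $\theta^{-1}$ are conjugating elements. Then for any $g\in G$ (for which the factorizations exist), \[ \bigl(\theta g^{-1}\theta^{-1}\bigr)_\pm=\theta g_\mp\theta^{-1}. \]
   Context: A Lie group $G$ with Lie algebra $\mathfrak g$ is symmetrically factorizable if $\mathfrak g=\mathfrak g_+\oplus\mathfrak g_-$ as a vector space with $\mathfrak g_\pm$ Lie subalgebras, and there is $\theta\in G$ (a conjugating element) with $\theta G_-=G_+\theta$, where $G_\pm$ are the Lie subgroups corresponding to $\mathfrak g_\pm$. For $g$ in an open dense subset one writes $g=g_+g_-^{-1}$ with $g_\pm\in G_\pm$, and $(h)_\pm$ denotes the factors $h_\pm$ of an element $h$. *)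

theory Defs
  imports "HOL-Algebra.Coset"
begin

definition factorizable :: "('a, 'b) monoid_scheme \<Rightarrow> 'a set \<Rightarrow> 'a set \<Rightarrow> 'a \<Rightarrow> bool" where
  "factorizable G Gp Gm g \<longleftrightarrow>
     (\<exists>!p. p \<in> Gp \<times> Gm \<and> g = fst p \<otimes>\<^bsub>G\<^esub> inv\<^bsub>G\<^esub> (snd p))"

definition fplus :: "('a, 'b) monoid_scheme \<Rightarrow> 'a set \<Rightarrow> 'a set \<Rightarrow> 'a \<Rightarrow> 'a" where
  "fplus G Gp Gm g = fst (THE p. p \<in> Gp \<times> Gm \<and> g = fst p \<otimes>\<^bsub>G\<^esub> inv\<^bsub>G\<^esub> (snd p))"

definition fminus :: "('a, 'b) monoid_scheme \<Rightarrow> 'a set \<Rightarrow> 'a set \<Rightarrow> 'a \<Rightarrow> 'a" where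
  "fminus G Gp Gm g = snd (THE p. p \<in> Gp \<times> Gm \<and> g = fst p \<otimes>\<^bsub>G\<^esub> inv\<^bsub>G\<^esub> (snd p))"

definition conjugating :: "('a, 'b) monoid_scheme \<Rightarrow> 'a set \<Rightarrow> 'a set \<Rightarrow> 'a \<Rightarrow> bool" where
  "conjugating G Gp Gm \<theta> \<longleftrightarrow> \<theta> \<in> carrier G \<and> \<theta> <#\<^bsub>G\<^esub> Gm = Gp #>\<^bsub>G\<^esub> \<theta>"

end

theory Submission
  imports Defs
begin

text \<open>Write \<open>c x = \<theta> x \<theta>\<^sup>-\<^sup>1\<close>. The two conjugation hypotheses say that \<open>c\<close> maps \<open>G\<^sub>-\<close> onto
  \<open>G\<^sub>+\<close> and \<open>G\<^sub>+\<close> onto \<open>G\<^sub>-\<close>. Inverting \<open>g = g\<^sub>+ g\<^sub>-\<^sup>-\<^sup>1\<close> gives \<open>g\<^sup>-\<^sup>1 = g\<^sub>- g\<^sub>+\<^sup>-\<^sup>1\<close>, a factorization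
  with the roles of the two subgroups exchanged, and applying the automorphism \<open>c\<close> turns it
  into \<open>c (g\<^sup>-\<^sup>1) = c g\<^sub>- (c g\<^sub>+)\<^sup>-\<^sup>1\<close>, a factorization with respect to \<open>(G\<^sub>+, G\<^sub>-)\<close> again.
  Uniqueness is transported along because both steps are bijections between the sets of
  factor pairs.\<close>

lemma factor_pair_eq:
  "(fplus G H K g, fminus G H K g) = (THE p. p \<in> H \<times> K \<and> g = fst p \<otimes>\<^bsub>G\<^esub> inv\<^bsub>G\<^esub> snd p)"
  by (simp add: fplus_def fminus_def)

lemma factorizable_transfer:
  assumes bij: "bij_betw \<Phi> (H \<times> K) (H' \<times> K')"
    and corresp: "\<And>p. p \<in> H \<times> K \<Longrightarrow>
      g = fst p \<otimes>\<^bsub>G\<^esub> inv\<^bsub>G\<^esub> snd p \<longleftrightarrow> g' = fst (\<Phi> p) \<otimes>\<^bsub>G'\<^esub> inv\<^bsub>G'\<^esub> snd (\<Phi> p)"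
    and "factorizable G H K g"
  shows "factorizable G' H' K' g'
    \<and> (fplus G' H' K' g', fminus G' H' K' g') = \<Phi> (fplus G H K g, fminus G H K g)"
proof -
  define P where "P p \<longleftrightarrow> p \<in> H \<times> K \<and> g = fst p \<otimes>\<^bsub>G\<^esub> inv\<^bsub>G\<^esub> snd p" for p
  define P' where "P' q \<longleftrightarrow> q \<in> H' \<times> K' \<and> g' = fst q \<otimes>\<^bsub>G'\<^esub> inv\<^bsub>G'\<^esub> snd q" for q
  obtain p where p: "P p" and p_unique: "\<And>r. P r \<Longrightarrow> r = p"
    using \<open>factorizable G H K g\<close> unfolding factorizable_def P_def by blast
  have "P' (\<Phi> p)"
  proof -
    have "\<Phi> p \<in> H' \<times> K'"
      using p bij unfolding P_def by (auto dest: bij_betw_apply)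
    with p corresp[of p] show ?thesis
      unfolding P_def P'_def by blast
  qed
  moreover have "q = \<Phi> p" if "P' q" for q
  proof -
    have "q \<in> \<Phi> ` (H \<times> K)"
      using that bij_betw_imp_surj_on[OF bij] unfolding P'_def by simp
    then obtain r where r: "r \<in> H \<times> K" "q = \<Phi> r"
      by blast
    with that corresp[OF r(1)] have "P r"
      unfolding P_def P'_def by simp
    with r p_unique show ?thesis by blast
  qed
  ultimately have "\<exists>!q. P' q" and "(THE q. P' q) = \<Phi> p"
    by blast+
  moreover have "(THE r. P r) = p"
    using p p_unique by blast
  ultimately show ?thesis
    unfolding factorizable_def factor_pair_eq P_def P'_def by simp
qed

lemma (in group) factorizable_inv:
  assumes "H \<subseteq> carrier G" "K \<subseteq> carrier G" "g \<in> carrier G" "factorizable G H K g"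
  shows "factorizable G K H (inv g)
    \<and> fplus G K H (inv g) = fminus G H K g \<and> fminus G K H (inv g) = fplus G H K g"
proof -
  have swap_corresp: "g = a \<otimes> inv b \<longleftrightarrow> inv g = b \<otimes> inv a" if "a \<in> H" "b \<in> K" for a b
  proof -
    have a: "a \<in> carrier G" and b: "b \<in> carrier G"
      using that assms(1,2) by auto
    then have "g = a \<otimes> inv b \<longleftrightarrow> inv g = inv (a \<otimes> inv b)"
      using \<open>g \<in> carrier G\<close> by (simp add: inj_on_eq_iff[OF inv_inj])
    with a b show ?thesis
      by (simp add: inv_mult_group)
  qed
  have "bij_betw prod.swap (H \<times> K) (K \<times> H)"
    by (auto simp: bij_betw_def inj_on_def)
  then have "factorizable G K H (inv g)
    \<and> (fplus G K H (inv g), fminus G K H (inv g)) = prod.swap (fplus G H K g, fminus G H K g)"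
    by (rule factorizable_transfer[OF _ _ assms(4)]) (clarsimp simp: swap_corresp)
  then show ?thesis
    by simp
qed

lemma (in group) factorizable_conj:
  assumes "H \<subseteq> carrier G" "K \<subseteq> carrier G" "t \<in> carrier G" "g \<in> carrier G"
    and "factorizable G H K g"
  shows "factorizable G (t <# H #> inv t) (t <# K #> inv t) (t \<otimes> g \<otimes> inv t)
    \<and> fplus G (t <# H #> inv t) (t <# K #> inv t) (t \<otimes> g \<otimes> inv t) = t \<otimes> fplus G H K g \<otimes> inv t
    \<and> fminus G (t <# H #> inv t) (t <# K #> inv t) (t \<otimes> g \<otimes> inv t) = t \<otimes> fminus G H K g \<otimes> inv t"
proof -
  define c where "c x = t \<otimes> x \<otimes> inv t" for x
  have c_inj: "inj_on c (carrier G)"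
    using \<open>t \<in> carrier G\<close> by (auto simp: inj_on_def c_def)
  have c_bij: "bij_betw c M (t <# M #> inv t)" if "M \<subseteq> carrier G" for M
  proof -
    have "c ` M = t <# M #> inv t"
      using that \<open>t \<in> carrier G\<close> by (auto simp: c_def l_coset_def r_coset_def m_assoc)
    with that show ?thesis
      by (metis c_inj inj_on_imp_bij_betw inj_on_subset)
  qed
  have c_hom: "c (a \<otimes> inv b) = c a \<otimes> inv (c b)" if "a \<in> carrier G" "b \<in> carrier G" for a b
    using that \<open>t \<in> carrier G\<close>
    by (simp add: c_def inv_mult_group m_assoc) (simp add: m_assoc[symmetric])
  have c_corresp: "g = a \<otimes> inv b \<longleftrightarrow> c g = c a \<otimes> inv (c b)" if "a \<in> H" "b \<in> K" for a b
  proof -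
    have a: "a \<in> carrier G" and b: "b \<in> carrier G"
      using that assms(1,2) by auto
    then have "g = a \<otimes> inv b \<longleftrightarrow> c g = c (a \<otimes> inv b)"
      using \<open>g \<in> carrier G\<close> by (simp add: inj_on_eq_iff[OF c_inj])
    with a b show ?thesis
      by (simp add: c_hom)
  qed
  have "factorizable G (t <# H #> inv t) (t <# K #> inv t) (c g)
    \<and> (fplus G (t <# H #> inv t) (t <# K #> inv t) (c g), fminus G (t <# H #> inv t) (t <# K #> inv t) (c g))
      = map_prod c c (fplus G H K g, fminus G H K g)"
    by (rule factorizable_transfer[OF bij_betw_map_prod[OF c_bij[OF assms(1)] c_bij[OF assms(2)]]
          _ assms(5)])
      (clarsimp simp: c_corresp)
  then show ?thesis
    by (simp add: c_def)
qed

lemma (in group) conjugating_conj_eq: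
  assumes "Gp \<subseteq> carrier G" "Gm \<subseteq> carrier G" "conjugating G Gp Gm t"
  shows "t <# Gm #> inv t = Gp"
  using assms by (simp add: conjugating_def coset_mult_assoc)

lemma (in group) conjugating_inv_conj_eq:
  assumes "Gp \<subseteq> carrier G" "Gm \<subseteq> carrier G" "conjugating G Gp Gm (inv t)" "t \<in> carrier G"
  shows "t <# Gp #> inv t = Gm"
proof -
  have "Gm = t <# (inv t <# Gm)"
    using assms by (simp add: lcos_m_assoc lcos_mult_one)
  also have "\<dots> = t <# Gp #> inv t"
    using assms by (simp add: conjugating_def coset_assoc)
  finally show ?thesis by simp
qed

theorem mainTheorem6:
  fixes G :: "('a, 'b) monoid_scheme" and Gp Gm :: "'a set" and \<theta> g :: 'a
  assumes "group G"
    and "subgroup Gp G" and "subgroup Gm G"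
    and "conjugating G Gp Gm \<theta>"
    and "conjugating G Gp Gm (inv\<^bsub>G\<^esub> \<theta>)"
    and "g \<in> carrier G"
    and "factorizable G Gp Gm g"
  shows "factorizable G Gp Gm (\<theta> \<otimes>\<^bsub>G\<^esub> inv\<^bsub>G\<^esub> g \<otimes>\<^bsub>G\<^esub> inv\<^bsub>G\<^esub> \<theta>)
    \<and> fplus G Gp Gm (\<theta> \<otimes>\<^bsub>G\<^esub> inv\<^bsub>G\<^esub> g \<otimes>\<^bsub>G\<^esub> inv\<^bsub>G\<^esub> \<theta>)
        = \<theta> \<otimes>\<^bsub>G\<^esub> fminus G Gp Gm g \<otimes>\<^bsub>G\<^esub> inv\<^bsub>G\<^esub> \<theta>
    \<and> fminus G Gp Gm (\<theta> \<otimes>\<^bsub>G\<^esub> inv\<^bsub>G\<^esub> g \<otimes>\<^bsub>G\<^esub> inv\<^bsub>G\<^esub> \<theta>)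
        = \<theta> \<otimes>\<^bsub>G\<^esub> fplus G Gp Gm g \<otimes>\<^bsub>G\<^esub> inv\<^bsub>G\<^esub> \<theta>"
proof -
  interpret group G by fact
  have Gp: "Gp \<subseteq> carrier G" and Gm: "Gm \<subseteq> carrier G"
    using assms(2,3) subgroup.subset by auto
  have \<theta>_carrier: "\<theta> \<in> carrier G"
    using assms(4) by (simp add: conjugating_def)
  have "\<theta> <#\<^bsub>G\<^esub> Gm #>\<^bsub>G\<^esub> inv\<^bsub>G\<^esub> \<theta> = Gp"
    using conjugating_conj_eq[OF Gp Gm assms(4)] .
  moreover have "\<theta> <#\<^bsub>G\<^esub> Gp #>\<^bsub>G\<^esub> inv\<^bsub>G\<^esub> \<theta> = Gm"
    using conjugating_inv_conj_eq[OF Gp Gm assms(5) \<theta>_carrier] .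
  moreover have "factorizable G Gm Gp (inv\<^bsub>G\<^esub> g)"
    and "fplus G Gm Gp (inv\<^bsub>G\<^esub> g) = fminus G Gp Gm g"
    and "fminus G Gm Gp (inv\<^bsub>G\<^esub> g) = fplus G Gp Gm g"
    using factorizable_inv[OF Gp Gm assms(6,7)] by auto
  ultimately show ?thesis
    using factorizable_conj[OF Gm Gp \<theta>_carrier inv_closed[OF assms(6)]] by simp
qed

end
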